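(* Let $G$ be a Tanner graph representing the binary code $\mathcal{C}$, and let $G'$ be obtained from $G$ by adding redundant check nodes, i.e. new check nodes adjacent to existing variable nodes such that $G'$ represents the same code $\mathcal{C}$. Then every lift-realizable pseudocodeword of $G'$ is a lift-realizable pseudocodeword of $G$; that is, the set of lift-realizable pseudocodewords can only shrink when redundant check nodes are added.
   Context: A Tanner graph is a finite bipartite graph with variable nodes $v_1,\dots,v_n$ and check nodes; its code consists of all $x\in\{0,1\}^n$ with every check node having an even number of neighbours $v_i$ with $x_i=1$. A degree-$\ell$ lift replaces each node by $\ell$ copies and each edge by a perfect matching between copy-sets; a lift-realizable pseudocodeword $p\in\mathbb{Z}_{\ge0}^n$ is obtained from a codeword of the code of a finite lift by letting $p_i$ be the number of copies of $v_i$ assigned 1. *)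

theory Defs
  imports Main
begin

definition tanner_graph :: "'v set \<Rightarrow> 'c set \<Rightarrow> ('v \<times> 'c) set \<Rightarrow> bool" where
  "tanner_graph V C E \<longleftrightarrow> finite V \<and> finite C \<and> E \<subseteq> V \<times> C"

definition tanner_code :: "'v set \<Rightarrow> 'c set \<Rightarrow> ('v \<times> 'c) set \<Rightarrow> ('v \<Rightarrow> bool) set" where
  "tanner_code V C E = {x. (\<forall>v. v \<notin> V \<longrightarrow> \<not> x v) \<and>
      (\<forall>c\<in>C. even (card {v\<in>V. (v, c) \<in> E \<and> x v}))}"

text \<open>Degree-l lift with permutations pi: each edge (v,c) is replaced by the perfect matching
 joining copy (v,a) to copy (c, pi (v,c) a).\<close>
definition lift_edges :: "nat \<Rightarrow> ('v \<times> 'c \<Rightarrow> nat \<Rightarrow> nat) \<Rightarrow> ('v \<times> 'c) set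
      \<Rightarrow> (('v \<times> nat) \<times> ('c \<times> nat)) set" where
  "lift_edges l pi E = {((v, a), (c, pi (v, c) a)) | v c a. (v, c) \<in> E \<and> a < l}"

definition is_lift_perm :: "nat \<Rightarrow> ('v \<times> 'c) set \<Rightarrow> ('v \<times> 'c \<Rightarrow> nat \<Rightarrow> nat) \<Rightarrow> bool" where
  "is_lift_perm l E pi \<longleftrightarrow> (\<forall>e\<in>E. bij_betw (pi e) {..<l} {..<l})"

definition lift_pseudocodeword :: "'v set \<Rightarrow> 'c set \<Rightarrow> ('v \<times> 'c) set \<Rightarrow> ('v \<Rightarrow> nat) \<Rightarrow> bool" where
  "lift_pseudocodeword V C E p \<longleftrightarrow>
     (\<exists>l pi x. l \<ge> 1 \<and> is_lift_perm l E pi \<and>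
        x \<in> tanner_code (V \<times> {..<l}) (C \<times> {..<l}) (lift_edges l pi E) \<and>
        p = (\<lambda>v. if v \<in> V then card {a. a < l \<and> x (v, a)} else 0))"

end

theory Submission
  imports Defs
begin

text \<open>Deleting check nodes together with their edges turns a lift of a Tanner graph into a
  lift of the smaller graph with the same permutations, and every codeword of the bigger
  lifted code satisfies the surviving checks. Hence pseudocodewords only disappear when
  checks are added.\<close>

lemma is_lift_perm_mono:
  assumes "E \<subseteq> F" and "is_lift_perm l F pi"
  shows "is_lift_perm l E pi"
  using assms unfolding is_lift_perm_def by blast

lemma lift_edges_iff_at_check:
  assumes "\<And>v. (v, c) \<in> F \<longleftrightarrow> (v, c) \<in> E"
  shows "((w, (c, b)) \<in> lift_edges l pi F) \<longleftrightarrow> ((w, (c, b)) \<in> lift_edges l pi E)"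
  using assms unfolding lift_edges_def by blast

lemma tanner_code_delete_checks:
  assumes "C \<subseteq> D" and "\<And>v c. c \<in> C \<Longrightarrow> (v, c) \<in> F \<longleftrightarrow> (v, c) \<in> E"
  shows "tanner_code V D F \<subseteq> tanner_code V C E"
proof
  fix x assume x: "x \<in> tanner_code V D F"
  have "{v \<in> V. (v, c) \<in> E \<and> x v} = {v \<in> V. (v, c) \<in> F \<and> x v}" if "c \<in> C" for c
    using assms(2)[OF that] by blast
  with x assms(1) show "x \<in> tanner_code V C E"
    unfolding tanner_code_def by (simp add: subset_iff)
qed

lemma lift_pseudocodeword_delete_checks:
  assumes "C \<subseteq> D" and "E \<subseteq> F"
    and "\<And>v c. c \<in> C \<Longrightarrow> (v, c) \<in> F \<Longrightarrow> (v, c) \<in> E"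
    and "lift_pseudocodeword V D F p"
  shows "lift_pseudocodeword V C E p"
proof -
  obtain l pi x where l: "l \<ge> 1" and pi: "is_lift_perm l F pi"
    and x: "x \<in> tanner_code (V \<times> {..<l}) (D \<times> {..<l}) (lift_edges l pi F)"
    and p: "p = (\<lambda>v. if v \<in> V then card {a. a < l \<and> x (v, a)} else 0)"
    using assms(4) unfolding lift_pseudocodeword_def by blast
  have "tanner_code (V \<times> {..<l}) (D \<times> {..<l}) (lift_edges l pi F)
      \<subseteq> tanner_code (V \<times> {..<l}) (C \<times> {..<l}) (lift_edges l pi E)"
  proof (rule tanner_code_delete_checks)
    show "C \<times> {..<l} \<subseteq> D \<times> {..<l}" using assms(1) by blast
  next
    fix w cb assume "cb \<in> C \<times> {..<l}"
    then obtain c b where cb: "cb = (c, b)" and c: "c \<in> C" by blast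
    have "(v, c) \<in> F \<longleftrightarrow> (v, c) \<in> E" for v
      using assms(2) assms(3)[OF c] by blast
    then show "(w, cb) \<in> lift_edges l pi F \<longleftrightarrow> (w, cb) \<in> lift_edges l pi E"
      unfolding cb by (rule lift_edges_iff_at_check)
  qed
  with x have "x \<in> tanner_code (V \<times> {..<l}) (C \<times> {..<l}) (lift_edges l pi E)" by blast
  moreover have "is_lift_perm l E pi" using assms(2) pi by (rule is_lift_perm_mono)
  ultimately show ?thesis unfolding lift_pseudocodeword_def using l p by blast
qed

theorem theorem11:
  fixes V :: "'v set" and C C' :: "'c set" and E E' :: "('v \<times> 'c) set" and p :: "'v \<Rightarrow> nat"
  assumes "tanner_graph V C E"
    and "tanner_graph V C' E'"
    and "C \<inter> C' = {}"
    and "tanner_code V (C \<union> C') (E \<union> E') = tanner_code V C E"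
    and "lift_pseudocodeword V (C \<union> C') (E \<union> E') p"
  shows "lift_pseudocodeword V C E p"
proof (rule lift_pseudocodeword_delete_checks)
  show "C \<subseteq> C \<union> C'" and "E \<subseteq> E \<union> E'" by blast+
  show "(v, c) \<in> E" if "c \<in> C" and "(v, c) \<in> E \<union> E'" for v c
    using that assms(2,3) unfolding tanner_graph_def by blast
qed (fact assms(5))

end
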